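(* For integers $m\ge2$ let $$P(m)=\frac{m}{\sqrt\pi}\int_{-\infty}^{\infty}e^{-t^2}\bigl(1-\Phi(t)\bigr)^{m-1}\,dt.$$ Then $P(m)\le \dfrac{2\pi\sqrt2}{\sqrt{2m+1}}$ for all $m\ge 2$; in particular $P(m)\to0$ as $m\to\infty$.
   Context: $\Phi$ is the standard normal cumulative distribution function. $P(m)$ is the limit as the number of voters tends to infinity of the probability that a Condorcet winner exists among $m$ candidates under the impartial culture (each voter independently picks one of the $m!$ strict rankings uniformly at random). *)

theory Defs
  imports "HOL-Analysis.Analysis"
begin

definition Phi :: "real \<Rightarrow> real" where
  "Phi x = (LBINT s:{..x}. exp (- (s\<^sup>2) / 2) / sqrt (2 * pi))"

definition P :: "nat \<Rightarrow> real" where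
  "P m = real m / sqrt pi * (LBINT t. exp (- (t\<^sup>2)) * (1 - Phi t) ^ (m - 1))"

end

theory Submission
  imports Defs "HOL-Probability.Probability" "HOL-Real_Asymp.Real_Asymp"
begin

text \<open>
  Put \<open>r = sqrt (2 * pi)\<close> and \<open>\<phi> = \<Phi>'\<close>, so that
  \<open>exp (- t\<^sup>2) = r \<phi>(t) \<cdot> exp (- t\<^sup>2 / 2)\<close>. The Gaussian lower tail is not
  too thin: \<open>exp (- t\<^sup>2) \<le> 2 r \<Phi>(t)\<close>. Bounding the second factor
  \<open>exp (- t\<^sup>2 / 2)\<close> by AM-GM against this estimate turns the integrand of \<open>P m\<close>
  into a combination of \<open>\<phi> (1 - \<Phi>)\<^sup>m\<^sup>-\<^sup>1\<close> and
  \<open>\<phi> \<Phi> (1 - \<Phi>)\<^sup>m\<^sup>-\<^sup>1\<close>, whose integrals \<open>1/m\<close> and \<open>1/(m (m + 1))\<close> are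
  elementary after the substitution \<open>u = \<Phi>(t)\<close>. Balancing the AM-GM weight
  gives \<open>P m = O(1 / sqrt m)\<close>.
\<close>

interpretation std_normal: real_distribution std_normal_distribution
  by (rule real_dist_normal_dist)

lemma Phi_eq_cdf: "Phi x = cdf std_normal_distribution x"
proof -
  have "cdf std_normal_distribution x = integral\<^sup>L std_normal_distribution (indicator {..x})"
    by (simp add: cdf_def2)
  also have "\<dots> = (LBINT s:{..x}. std_normal_density s)"
    by (subst integral_density) (auto simp: set_lebesgue_integral_def mult.commute)
  finally show ?thesis
    by (simp add: Phi_def std_normal_density_def)
qed

lemma Phi_nonneg: "0 \<le> Phi x"
  by (simp add: Phi_eq_cdf std_normal.cdf_nonneg)

lemma Phi_le_1: "Phi x \<le> 1"
  by (simp add: Phi_eq_cdf std_normal.cdf_bounded_prob)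

lemma tendsto_Phi_at_top: "(Phi \<longlongrightarrow> 1) at_top"
  using std_normal.cdf_lim_at_top_prob by (simp add: Phi_eq_cdf[abs_def])

lemma tendsto_Phi_at_bot: "(Phi \<longlongrightarrow> 0) at_bot"
  using std_normal.cdf_lim_at_bot by (simp add: Phi_eq_cdf[abs_def])

lemma isCont_std_normal_density: "isCont std_normal_density x"
  unfolding normal_density_def by (intro continuous_intros) auto

lemma set_integrable_std_normal_density:
  "A \<in> sets lborel \<Longrightarrow> set_integrable lborel A std_normal_density"
  unfolding set_integrable_def by (intro integrable_mult_indicator) auto

lemma Phi_split:
  assumes "a \<le> u"
  shows "Phi u = (LBINT s:{..<a}. std_normal_density s) + integral {a..u} std_normal_density"
proof -
  have "{..u} = {..<a} \<union> {a..u}"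
    using assms by auto
  then have "Phi u = (LBINT s:({..<a} \<union> {a..u}). std_normal_density s)"
    by (simp add: Phi_def std_normal_density_def)
  also have "\<dots> = (LBINT s:{..<a}. std_normal_density s) + (LBINT s:{a..u}. std_normal_density s)"
    by (rule set_integral_Un) (auto simp: set_integrable_std_normal_density)
  also have "(LBINT s:{a..u}. std_normal_density s) = integral {a..u} std_normal_density"
    by (rule set_borel_integral_eq_integral(2)) (simp add: set_integrable_std_normal_density)
  finally show ?thesis .
qed

lemma Phi_has_real_derivative: "(Phi has_real_derivative std_normal_density x) (at x)"
proof -
  have "((\<lambda>u. integral {x - 1..u} std_normal_density) has_real_derivative std_normal_density x)
          (at x within {x - 1..x + 1})"
    by (rule integral_has_real_derivative)
       (auto intro: continuous_at_imp_continuous_on isCont_std_normal_density)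
  then have "((\<lambda>u. (LBINT s:{..<x - 1}. std_normal_density s) + integral {x - 1..u} std_normal_density)
               has_real_derivative std_normal_density x) (at x)"
    by (auto simp: at_within_Icc_at intro!: derivative_eq_intros)
  then show ?thesis
    by (rule has_field_derivative_transform_within_open[where S = "{x - 1<..<x + 1}"])
       (auto simp: Phi_split[of "x - 1"])
qed

lemma isCont_Phi: "isCont Phi x"
  using Phi_has_real_derivative by (rule DERIV_isCont)

lemma has_bochner_integral_normal_survival_power:
  "has_bochner_integral lborel (\<lambda>t. std_normal_density t * (1 - Phi t) ^ k) (1 / (real k + 1))"
proof -
  let ?F = "\<lambda>t. - ((1 - Phi t) ^ (k + 1)) / (real k + 1)"
  let ?f = "\<lambda>t. std_normal_density t * (1 - Phi t) ^ k"
  have deriv: "(?F has_real_derivative ?f x) (at x)" for x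
  proof -
    have "((\<lambda>t. (1 - Phi t) ^ (k + 1)) has_real_derivative
            real (k + 1) * (1 - Phi x) ^ k * (0 - std_normal_density x)) (at x)"
      using DERIV_power[OF DERIV_diff[OF DERIV_const[of 1] Phi_has_real_derivative], where n = "k + 1"]
      by (simp add: mult_ac)
    from DERIV_cdivide[OF DERIV_minus[OF this], of "real k + 1"] show ?thesis
      by (rule DERIV_cong) (simp add: field_simps)
  qed
  have cont: "isCont ?f x" for x
    by (intro continuous_intros isCont_std_normal_density isCont_Phi)
  have nonneg: "AE x in lborel. -\<infinity> < ereal x \<longrightarrow> ereal x < \<infinity> \<longrightarrow> 0 \<le> ?f x"
    by (simp add: Phi_le_1)
  have lim_bot: "((?F \<circ> real_of_ereal) \<longlongrightarrow> - 1 / (real k + 1)) (at_right (-\<infinity>))"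
    unfolding ereal_tendsto_simps
    by (rule tendsto_eq_intros tendsto_Phi_at_bot refl | simp)+
  have lim_top: "((?F \<circ> real_of_ereal) \<longlongrightarrow> 0) (at_left \<infinity>)"
    unfolding ereal_tendsto_simps
    by (rule tendsto_eq_intros tendsto_Phi_at_top refl | simp)+
  note FTC = interval_integral_FTC_nonneg[of "-\<infinity>" \<infinity> ?F ?f, OF _ deriv cont nonneg lim_bot lim_top]
  show ?thesis
    using FTC by (simp add: has_bochner_integral_iff set_integrable_def interval_lebesgue_integral_def
        set_lebesgue_integral_def)
qed

lemma has_bochner_integral_normal_Phi_survival_power:
  "has_bochner_integral lborel (\<lambda>t. std_normal_density t * Phi t * (1 - Phi t) ^ k)
     (1 / ((real k + 1) * (real k + 2)))"
proof -
  have "has_bochner_integral lborel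
          (\<lambda>t. std_normal_density t * (1 - Phi t) ^ k - std_normal_density t * (1 - Phi t) ^ (k + 1))
          (1 / (real k + 1) - 1 / (real (k + 1) + 1))"
    by (intro has_bochner_integral_diff has_bochner_integral_normal_survival_power)
  then show ?thesis
    by (rule has_bochner_integral_cong[THEN iffD1, rotated 3]) (simp_all add: field_simps)
qed

lemma minus_mult_exp_neg_half_square_le_1: "- t * exp (- t\<^sup>2 / 2) \<le> (1::real)"
proof -
  have "- t \<le> 1 + t\<^sup>2 / 2"
    using zero_le_square[of "t + 1"] by (simp add: power2_eq_square algebra_simps)
  also have "\<dots> \<le> exp (t\<^sup>2 / 2)"
    by (rule exp_ge_add_one_self)
  finally have "- t * exp (- t\<^sup>2 / 2) \<le> exp (t\<^sup>2 / 2) * exp (- t\<^sup>2 / 2)"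
    by (rule mult_right_mono) simp
  then show ?thesis
    by (simp flip: exp_add)
qed

text \<open>Both sides vanish at \<open>-\<infinity>\<close>, and their difference is nondecreasing.\<close>

lemma exp_neg_square_le_Phi: "exp (- t\<^sup>2) \<le> 2 * sqrt (2 * pi) * Phi t"
proof -
  define g where "g t = 2 * sqrt (2 * pi) * Phi t - exp (- t\<^sup>2)" for t
  have g_deriv: "(g has_real_derivative 2 * exp (- x\<^sup>2 / 2) * (1 + x * exp (- x\<^sup>2 / 2))) (at x)" for x
    unfolding g_def[abs_def]
    by (auto intro!: derivative_eq_intros Phi_has_real_derivative
        simp: std_normal_density_def algebra_simps simp flip: exp_add)
  have "0 \<le> 2 * exp (- x\<^sup>2 / 2) * (1 + x * exp (- x\<^sup>2 / 2))" for x :: real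
    using minus_mult_exp_neg_half_square_le_1[of x] by simp
  then have g_mono: "g s \<le> g t" if "s \<le> t" for s
    using DERIV_nonneg_imp_nondecreasing[OF that] g_deriv by blast
  have "((\<lambda>t::real. exp (- t\<^sup>2)) \<longlongrightarrow> 0) at_bot"
    by real_asymp
  then have "(g \<longlongrightarrow> 2 * sqrt (2 * pi) * 0 - 0) at_bot"
    unfolding g_def[abs_def] by (intro tendsto_intros tendsto_Phi_at_bot)
  then have "0 \<le> g t"
    by (intro tendsto_le[OF trivial_limit_at_bot_linorder tendsto_const])
       (auto intro: eventually_mono[OF eventually_le_at_bot[of t] g_mono])
  then show ?thesis
    by (simp add: g_def)
qed

text \<open>AM-GM with weight \<open>c\<close> applied to \<open>exp (- t\<^sup>2) = sqrt (2 * pi) \<phi>(t) \<cdot> exp (- t\<^sup>2 / 2)\<close>.\<close>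

lemma exp_neg_square_le_AM_GM:
  assumes "0 < c"
  shows "exp (- t\<^sup>2) \<le> 2 * pi * c * std_normal_density t * Phi t
                        + sqrt (2 * pi) / (2 * c) * std_normal_density t"
proof -
  define a where "a = exp (- t\<^sup>2 / 2)"
  have a_sq: "a * a = exp (- t\<^sup>2)"
    by (simp add: a_def flip: exp_add)
  have "2 * c * a \<le> c * c * (a * a) + 1"
    using zero_le_square[of "c * a - 1"] by (simp add: power2_eq_square algebra_simps)
  also have "\<dots> \<le> c * c * (2 * sqrt (2 * pi) * Phi t) + 1"
    using mult_left_mono[OF exp_neg_square_le_Phi[of t], of "c * c"] by (simp add: a_sq)
  finally have "a \<le> c * sqrt (2 * pi) * Phi t + 1 / (2 * c)"
    using assms by (simp add: field_simps)
  then have "exp (- t\<^sup>2) \<le> a * (c * sqrt (2 * pi) * Phi t + 1 / (2 * c))"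
    unfolding a_sq[symmetric] by (rule mult_left_mono) (simp add: a_def)
  also have "a = sqrt (2 * pi) * std_normal_density t"
    by (simp add: a_def std_normal_density_def)
  finally show ?thesis
    by (simp add: algebra_simps)
qed

lemma P_nonneg: "0 \<le> P m"
  unfolding P_def using Phi_le_1
  by (intro mult_nonneg_nonneg integral_nonneg_AE AE_I2) auto

lemma P_le_AM_GM:
  assumes "1 \<le> m" and "0 < c"
  shows "P m \<le> 2 * sqrt pi * c / (m + 1) + sqrt 2 / (2 * c)"
proof -
  obtain k where m: "m = k + 1"
    using assms(1) by (metis add.commute le_Suc_ex)
  define f where "f t = exp (- t\<^sup>2) * (1 - Phi t) ^ k" for t
  define g where "g t = 2 * pi * c * (std_normal_density t * Phi t * (1 - Phi t) ^ k)
                  + sqrt (2 * pi) / (2 * c) * (std_normal_density t * (1 - Phi t) ^ k)" for t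
  have g_integral: "has_bochner_integral lborel g
      (2 * pi * c * (1 / ((real k + 1) * (real k + 2))) + sqrt (2 * pi) / (2 * c) * (1 / (real k + 1)))"
    unfolding g_def[abs_def]
    by (intro has_bochner_integral_add has_bochner_integral_mult_right
        has_bochner_integral_normal_survival_power has_bochner_integral_normal_Phi_survival_power)
  have "f t \<le> g t" for t
    using mult_right_mono[OF exp_neg_square_le_AM_GM[OF \<open>0 < c\<close>, of t], of "(1 - Phi t) ^ k"]
    by (simp add: f_def g_def Phi_le_1 algebra_simps)
  moreover have "0 \<le> g t" for t
    using assms by (simp add: g_def Phi_nonneg Phi_le_1)
  ultimately have "integral\<^sup>L lborel f \<le> integral\<^sup>L lborel g"
    using g_integral by (intro integral_mono') (auto simp: has_bochner_integral_iff)
  then have "m / sqrt pi * integral\<^sup>L lborel f \<le> m / sqrt pi * integral\<^sup>L lborel g"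
    by (rule mult_left_mono) simp
  then have "P m \<le> m / sqrt pi * integral\<^sup>L lborel g"
    by (simp add: P_def f_def[abs_def] m)
  also have "\<dots> = 2 * sqrt pi * c / (m + 1) + sqrt 2 / (2 * c)"
  proof -
    have "x / q * (2 * (q * q) * c * (1 / (x * (x + 1))) + sqrt 2 * q / (2 * c) * (1 / x))
            = 2 * q * c / (x + 1) + sqrt 2 / (2 * c)" if "0 < q" "0 < x" for q x :: real
      using that \<open>0 < c\<close> by (simp add: divide_simps) (simp add: algebra_simps)
    from this[of "sqrt pi" "real k + 1"] show ?thesis
      using g_integral by (simp add: has_bochner_integral_iff m real_sqrt_mult add.commute)
  qed
  finally show ?thesis .
qed

lemma two_sqrt_pi_plus_sqrt_2_le: "2 * sqrt pi + sqrt 2 \<le> 2 * pi * sqrt 2"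
proof -
  have "sqrt pi \<le> 2"
    using pi_less_4 real_sqrt_le_iff[of pi 4] by simp
  moreover have "6 * sqrt 2 \<le> 2 * pi * sqrt 2"
    using pi_gt3 by (intro mult_right_mono) auto
  moreover have "1 \<le> sqrt (2::real)"
    by simp
  ultimately show ?thesis
    by linarith
qed

lemma P_le:
  assumes "1 \<le> m"
  shows "P m \<le> 2 * pi * sqrt 2 / sqrt (2 * real m + 1)"
proof -
  define s where "s = sqrt (2 * real m + 1)"
  have "0 < s" and s_sq: "s * s = 2 * real m + 1"
    by (simp_all add: s_def)
  have "P m \<le> 2 * sqrt pi * (s / 2) / (m + 1) + sqrt 2 / (2 * (s / 2))"
    using P_le_AM_GM[OF assms, of "s / 2"] \<open>0 < s\<close> by simp
  also have "\<dots> = (sqrt pi * (s * s) / (m + 1) + sqrt 2) / s"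
    using \<open>0 < s\<close> by (simp add: field_simps)
  also have "\<dots> \<le> (2 * sqrt pi + sqrt 2) / s"
    using \<open>0 < s\<close> by (intro divide_right_mono add_right_mono) (simp_all add: s_sq field_simps)
  also have "\<dots> \<le> 2 * pi * sqrt 2 / s"
    using \<open>0 < s\<close> two_sqrt_pi_plus_sqrt_2_le by (intro divide_right_mono) simp_all
  finally show ?thesis
    by (simp add: s_def)
qed

theorem mainTheorem5:
  shows "(\<forall>m::nat. m \<ge> 2 \<longrightarrow> P m \<le> 2 * pi * sqrt 2 / sqrt (2 * real m + 1))
         \<and> P \<longlonglongrightarrow> 0"
proof
  show "\<forall>m::nat. m \<ge> 2 \<longrightarrow> P m \<le> 2 * pi * sqrt 2 / sqrt (2 * real m + 1)"
    by (auto intro: P_le)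
  have bound_lim: "(\<lambda>m::nat. 2 * pi * sqrt 2 / sqrt (2 * real m + 1)) \<longlonglongrightarrow> 0"
    by real_asymp
  have bound_eventually: "\<forall>\<^sub>F m in sequentially. P m \<le> 2 * pi * sqrt 2 / sqrt (2 * real m + 1)"
    using eventually_ge_at_top[of "1::nat"] by eventually_elim (rule P_le)
  show "P \<longlonglongrightarrow> 0"
    by (rule tendsto_sandwich[OF _ bound_eventually tendsto_const bound_lim]) (simp add: P_nonneg)
qed

end
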